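(* Let $G$ be a circle of circumference $1$, let $\mathbf{x}\in G^n$ be such that the agents are on one semicircle, let $i\in N$ and $x_i'\in G$ be such that the agents in $\mathbf{x}'=(x_i',\mathbf{x}_{-i})$ are also on one semicircle. Then $\mathrm{cost}(\mathrm{lrm}(\mathbf{x}),x_i)\le\mathrm{cost}(\mathrm{lrm}(\mathbf{x}'),x_i)$.
   Context: $G$ is a circle of circumference $1$; $d(x,y)$ is the length of the shorter arc. For a distribution $P$ on $G$, $\mathrm{cost}(P,x_i)=\mathbb{E}_{y\sim P}[d(x_i,y)]$. Agents are on one semicircle if all locations lie in some closed arc of length $1/2$. LRM mechanism: for such a profile fix a closed arc of minimal length containing all agent locations (length at most $1/2$), with endpoints $l,r$ (agent locations); $\mathrm{lrm}(\mathbf{x})$ returns $l$ with probability $1/4$, $r$ with probability $1/4$, and the midpoint of that arc with probability $1/2$. *)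

theory Defs
  imports "HOL-Probability.Probability"
begin

text \<open>The circle G of circumference 1 is modelled as the reals modulo 1: a real number
  represents the point it determines on the circle.\<close>

definition cdist :: "real \<Rightarrow> real \<Rightarrow> real" where
  "cdist x y = min (frac (x - y)) (1 - frac (x - y))"

text \<open>Closed arc going counterclockwise from a to b: its length and membership.\<close>
definition arc_len :: "real \<Rightarrow> real \<Rightarrow> real" where
  "arc_len a b = frac (b - a)"

definition in_arc :: "real \<Rightarrow> real \<Rightarrow> real \<Rightarrow> bool" where
  "in_arc a b y \<longleftrightarrow> frac (y - a) \<le> frac (b - a)"

definition arc_mid :: "real \<Rightarrow> real \<Rightarrow> real" where
  "arc_mid a b = a + frac (b - a) / 2"

definition on_semicircle :: "nat \<Rightarrow> (nat \<Rightarrow> real) \<Rightarrow> bool" where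
  "on_semicircle n x \<longleftrightarrow> (\<exists>a. \<forall>j<n. in_arc a (a + 1/2) (x j))"

definition min_arc :: "nat \<Rightarrow> (nat \<Rightarrow> real) \<Rightarrow> real \<Rightarrow> real \<Rightarrow> bool" where
  "min_arc n x l r \<longleftrightarrow> l \<in> x ` {..<n} \<and> r \<in> x ` {..<n} \<and>
     (\<forall>j<n. in_arc l r (x j)) \<and>
     (\<forall>a b. (\<forall>j<n. in_arc a b (x j)) \<longrightarrow> arc_len l r \<le> arc_len a b)"

definition cost :: "real pmf \<Rightarrow> real \<Rightarrow> real" where
  "cost P y = measure_pmf.expectation P (\<lambda>z. cdist y z)"

text \<open>LRM output for a chosen minimal arc with endpoints l, r:
  l w.p. 1/4, r w.p. 1/4, midpoint w.p. 1/2.\<close>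
definition lrm :: "real \<Rightarrow> real \<Rightarrow> real pmf" where
  "lrm l r = bind_pmf (bernoulli_pmf (1/2)) (\<lambda>b.
     if b then return_pmf (arc_mid l r)
     else map_pmf (\<lambda>c. if c then l else r) (bernoulli_pmf (1/2)))"

end

theory Submission imports Defs begin

(* Let p = x_i and let [l, r] be the minimal arc of x, of length L <= 1/2.
   Measuring positions counterclockwise from l turns the arc into the real interval [0, L]
   and the circle distance into the "circular norm" of a difference of coordinates.
   Two facts about LRM on an arc of length at most 1/2 then carry the theorem:
   (1) for a point p inside the arc, cost (lrm l r) p = max (d p l) (d p r) / 2;
   (2) for any point p and any point q of the arc, d p q / 2 <= cost (lrm l r) p.
   The farther endpoint q of [l, r] is an agent x_j.  If j = i, then q = p and the
   cost of lrm x at p is 0.  Otherwise x_j is unchanged in x' and hence lies on the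
   minimal arc [l', r'] of x', so (1) and (2) give
   cost (lrm l r) p = d p q / 2 <= cost (lrm l' r') p.
   The file first develops the circular norm, then the coordinate representation of
   cdist and the cost of LRM, then facts (1) and (2), and finally the theorem. *)

text \<open>Distance on the circle between 0 and w, valid for reals with absolute value at most 1.\<close>
definition circ_norm :: "real \<Rightarrow> real" where
  "circ_norm w = min \<bar>w\<bar> (1 - \<bar>w\<bar>)"

lemma circ_norm_lipschitz: "circ_norm a \<le> circ_norm b + \<bar>a - b\<bar>"
proof -
  have "\<bar>a\<bar> \<le> \<bar>b\<bar> + \<bar>a - b\<bar>" "\<bar>b\<bar> \<le> \<bar>a\<bar> + \<bar>a - b\<bar>" by linarith+
  thus ?thesis unfolding circ_norm_def min_def by auto
qed

lemma circ_norm_triangle: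
  assumes "\<bar>a\<bar> \<le> 1" "\<bar>b\<bar> \<le> 1" "\<bar>a - b\<bar> \<le> 1"
  shows "circ_norm (a - b) \<le> circ_norm a + circ_norm b"
  using assms unfolding circ_norm_def min_def by (auto simp: abs_if)

lemma circ_norm_short: "0 \<le> c \<Longrightarrow> c \<le> 1/2 \<Longrightarrow> circ_norm c = c"
  unfolding circ_norm_def by auto

text \<open>This is fact (2) in coordinates: split by the half of the segment containing s.\<close>
lemma circ_norm_segment_bound:
  assumes "0 \<le> s" "s \<le> L" "L \<le> 1/2" "0 \<le> u" "u < 1"
  shows "circ_norm (u - s) \<le> (circ_norm u + circ_norm (u - L)) / 2 + circ_norm (u - L/2)"
proof (cases "s \<le> L/2")
  case True
  have near_0: "circ_norm (u - s) \<le> circ_norm u + s"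
    using circ_norm_lipschitz[of "u - s" u] assms by simp
  have near_mid: "circ_norm (u - s) \<le> circ_norm (u - L/2) + (L/2 - s)"
    using circ_norm_lipschitz[of "u - s" "u - L/2"] assms True by simp
  have "circ_norm ((u - L/2) - (u - L)) \<le> circ_norm (u - L/2) + circ_norm (u - L)"
    using assms by (intro circ_norm_triangle) auto
  then have mid_L: "L/2 \<le> circ_norm (u - L/2) + circ_norm (u - L)"
    using circ_norm_short[of "L/2"] assms by simp
  show ?thesis using near_0 near_mid mid_L by (simp add: field_simps)
next
  case False
  have near_L: "circ_norm (u - s) \<le> circ_norm (u - L) + (L - s)"
    using circ_norm_lipschitz[of "u - s" "u - L"] assms by simp
  have near_mid: "circ_norm (u - s) \<le> circ_norm (u - L/2) + (s - L/2)"
    using circ_norm_lipschitz[of "u - s" "u - L/2"] assms False by simp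
  have "circ_norm (u - (u - L/2)) \<le> circ_norm u + circ_norm (u - L/2)"
    using assms by (intro circ_norm_triangle) auto
  then have zero_mid: "L/2 \<le> circ_norm u + circ_norm (u - L/2)"
    using circ_norm_short[of "L/2"] assms by simp
  show ?thesis using near_L near_mid zero_mid by (simp add: field_simps)
qed

text \<open>For u inside the segment [0, L], the LRM average equals half the distance to the
  farther endpoint: this is fact (1) in coordinates.\<close>
lemma circ_norm_segment_inside:
  assumes "0 \<le> u" "u \<le> L" "L \<le> 1/2"
  shows "(circ_norm u + circ_norm (u - L)) / 4 + circ_norm (u - L/2) / 2
           = max (circ_norm u) (circ_norm (u - L)) / 2"
proof -
  have "circ_norm u = u" "circ_norm (u - L) = L - u" "circ_norm (u - L/2) = \<bar>u - L/2\<bar>"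
    using assms unfolding circ_norm_def by auto
  thus ?thesis by (simp add: max_def abs_if)
qed

text \<open>The circle distance via coordinates frac (- - c) measured from an arbitrary base
  point c; coordinate differences lie in (-1, 1), where the circular norm is exact.\<close>
lemma cdist_coordinates: "cdist y z = circ_norm (frac (y - c) - frac (z - c))"
proof -
  define w where "w = frac (y - c) - frac (z - c)"
  have w_range: "-1 < w" "w < 1"
    using frac_lt_1[of "y - c"] frac_ge_0[of "y - c"] frac_lt_1[of "z - c"]
      frac_ge_0[of "z - c"] unfolding w_def by linarith+
  have "frac (y - z) = frac w"
    using frac_diff[of "y - c" "z - c"] unfolding w_def by simp
  moreover have "min (frac w) (1 - frac w) = circ_norm w"
  proof (cases "w \<ge> 0")
    case True thus ?thesis using w_range by (simp add: frac_eq circ_norm_def)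
  next
    case False
    then have "frac w = w + 1" using w_range unfolding frac_unique_iff by simp
    thus ?thesis using w_range False by (simp add: circ_norm_def)
  qed
  ultimately show ?thesis unfolding cdist_def w_def by simp
qed

lemma cdist_nonneg: "0 \<le> cdist y z"
  unfolding cdist_def using frac_ge_0[of "y - z"] frac_lt_1[of "y - z"] by simp

lemma cost_lrm: "cost (lrm l r) y = (cdist y l + cdist y r) / 4 + cdist y (arc_mid l r) / 2"
  unfolding cost_def lrm_def
  by (subst pmf_expectation_bind[where A = UNIV]) (auto simp: UNIV_bool)

lemma cost_lrm_nonneg: "0 \<le> cost (lrm l r) p"
  unfolding cost_lrm using cdist_nonneg[of p] by (simp add: add_nonneg_nonneg)

text \<open>The same cost in coordinates based at l, for an arc of length at most 1/2 (whose
  midpoint then has coordinate half the arc length).\<close>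
lemma cost_lrm_coordinates:
  assumes "frac (r - l) \<le> 1/2"
  shows "cost (lrm l r) p = (circ_norm (frac (p - l)) + circ_norm (frac (p - l) - frac (r - l))) / 4
           + circ_norm (frac (p - l) - frac (r - l) / 2) / 2"
proof -
  have mid: "frac (arc_mid l r - l) = frac (r - l) / 2"
    unfolding arc_mid_def using assms frac_ge_0[of "r - l"] by (simp add: frac_eq)
  show ?thesis
    unfolding cost_lrm cdist_coordinates[of p l l] cdist_coordinates[of p r l]
      cdist_coordinates[of p "arc_mid l r" l] mid
    by simp
qed

lemma cost_lrm_inside:
  assumes "in_arc l r p" "frac (r - l) \<le> 1/2"
  shows "cost (lrm l r) p = max (cdist p l) (cdist p r) / 2"
  unfolding cost_lrm_coordinates[OF assms(2)] cdist_coordinates[of p l l] cdist_coordinates[of p r l]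
  using assms frac_ge_0[of "p - l"] unfolding in_arc_def by (simp add: circ_norm_segment_inside)

lemma cost_lrm_lower_bound:
  assumes "in_arc l r q" "frac (r - l) \<le> 1/2"
  shows "cdist p q / 2 \<le> cost (lrm l r) p"
proof -
  have "circ_norm (frac (p - l) - frac (q - l))
      \<le> (circ_norm (frac (p - l)) + circ_norm (frac (p - l) - frac (r - l))) / 2
         + circ_norm (frac (p - l) - frac (r - l) / 2)"
    using assms frac_ge_0[of "q - l"] frac_ge_0[of "p - l"] frac_lt_1[of "p - l"]
    unfolding in_arc_def by (intro circ_norm_segment_bound) auto
  then show ?thesis
    unfolding cost_lrm_coordinates[OF assms(2)] cdist_coordinates[of p q l] by (simp add: field_simps)
qed

lemma min_arc_short:
  assumes "on_semicircle n x" "min_arc n x l r"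
  shows "frac (r - l) \<le> 1/2"
proof -
  obtain a where "\<forall>j<n. in_arc a (a + 1/2) (x j)"
    using assms(1) unfolding on_semicircle_def by blast
  then have "arc_len l r \<le> arc_len a (a + 1/2)"
    using assms(2) unfolding min_arc_def by blast
  moreover have "arc_len a (a + 1/2) = 1/2" unfolding arc_len_def by (simp add: frac_eq)
  ultimately show ?thesis unfolding arc_len_def by simp
qed

theorem mainTheorem10:
  fixes n :: nat and x :: "nat \<Rightarrow> real" and i :: nat and xi' :: real
    and l r l' r' :: real
  assumes "i < n"
    and "on_semicircle n x"
    and "on_semicircle n (x(i := xi'))"
    and "min_arc n x l r"
    and "min_arc n (x(i := xi')) l' r'"
  shows "cost (lrm l r) (x i) \<le> cost (lrm l' r') (x i)"
proof -
  have short: "frac (r - l) \<le> 1/2" and short': "frac (r' - l') \<le> 1/2"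
    using min_arc_short assms(2-5) by blast+
  obtain q where q: "q \<in> {l, r}" "max (cdist (x i) l) (cdist (x i) r) = cdist (x i) q"
    by (cases "cdist (x i) l \<le> cdist (x i) r") (auto simp: max_def)
  have "in_arc l r (x i)" using assms(1,4) unfolding min_arc_def by blast
  then have cost_x: "cost (lrm l r) (x i) = cdist (x i) q / 2"
    using cost_lrm_inside[OF _ short] q(2) by simp
  obtain j where j: "j < n" "q = x j" using q(1) assms(4) unfolding min_arc_def by auto
  show ?thesis
  proof (cases "j = i")
    case True
    then show ?thesis using cost_x j cost_lrm_nonneg unfolding cdist_def by simp
  next
    case False
    then have "in_arc l' r' q" using j assms(5) unfolding min_arc_def by (metis fun_upd_other)
    then have "cdist (x i) q / 2 \<le> cost (lrm l' r') (x i)"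
      using cost_lrm_lower_bound[OF _ short'] by blast
    then show ?thesis using cost_x by simp
  qed
qed

end
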